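(* Let $\zeta\in(0,1]$ and $c=\zeta/20000$. Let $n'\ge1$, $p_1,\dots,p_{n'}\ge1$, and let $x_j\in[0,1]$ and $x_{\{j\}\cup\{j'\}}$ ($1\le j,j'\le n'$) be reals with $x_{\{j\}\cup\{j'\}}=x_{\{j'\}\cup\{j\}}\ge0$ and $x_{\{j\}\cup\{j\}}=x_j$, such that the matrix indexed by $0,1,\dots,n'$ with $(0,0)$-entry $1$, $(0,j)$- and $(j,0)$-entries $x_j$ and $(j,j')$-entry $x_{\{j\}\cup\{j'\}}$ is positive semidefinite. Say job $j$ has class $k\in\mathbb Z$ if $p_j\in[10^{k-1},10^k)$. Let $\mathcal G$ be a family of pairwise disjoint nonempty subsets of $\{1,\dots,n'\}$, each consisting of jobs of a single class and each with $\sum_{j\in G'}x_j\ge1/10$; let $G=\bigcup\mathcal G$ and $\bar G=\{1,\dots,n'\}\setminus G$, and assume that for every class $k$, $\sum_{j\in\bar G,\ j\text{ of class }k}x_j<1/10$. Let $X_1,\dots,X_{n'}$ be $\{0,1\}$-valued random variables with $\mathbb E[X_j]=x_j$, $\mathbb E[X_jX_{j'}]\le x_jx_{j'}$ for $j\ne j'$, and $\mathbb E[X_jX_{j'}]\le(1-\zeta)x_jx_{j'}$ for distinct $j,j'$ in a common group of $\mathcal G$. Then $$\mathbb E\Big[\sum_{j=1}^{n'}p_jX_j(p_1X_1+\dots+p_jX_j)\Big]\le\Big(\frac32-c\Big)\sum_{j=1}^{n'}p_j\big(p_1x_{\{j\}\cup\{1\}}+\dots+p_jx_{\{j\}\cu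p\{j\}}\big).$$
   Context: In the paper this is the per-machine inequality for a fixed machine and a prefix $\{1,\dots,n'\}$ of jobs in Smith's order, where $X_j$ comes from the rounding of Theorem 2 (with $\zeta=1/108$), the $x$'s from the SDP solution, and $\mathcal G$ from the grouping procedure (groups restricted to those entirely within $\{1,\dots,n'\}$). *)

theory Defs
  imports "HOL-Probability.Probability"
begin

text \<open>The (n'+1)x(n'+1) matrix indexed by 0..n' built from the SDP solution:
  entry (0,0) is 1, entries (0,j),(j,0) are x j, entry (j,j') is y j j'
  (y j j' stands for the variable x_{{j} union {j'}}).\<close>
definition sdp_matrix :: "(nat \<Rightarrow> real) \<Rightarrow> (nat \<Rightarrow> nat \<Rightarrow> real) \<Rightarrow> nat \<Rightarrow> nat \<Rightarrow> real" where
  "sdp_matrix x y i j =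
     (if i = 0 \<and> j = 0 then 1
      else if i = 0 then x j
      else if j = 0 then x i
      else y i j)"

definition psd_on :: "nat \<Rightarrow> (nat \<Rightarrow> nat \<Rightarrow> real) \<Rightarrow> bool" where
  "psd_on n A \<longleftrightarrow>
     (\<forall>i\<in>{0..n}. \<forall>j\<in>{0..n}. A i j = A j i) \<and>
     (\<forall>v :: nat \<Rightarrow> real. (\<Sum>i=0..n. \<Sum>j=0..n. v i * A i j * v j) \<ge> 0)"

definition has_class :: "(nat \<Rightarrow> real) \<Rightarrow> nat \<Rightarrow> int \<Rightarrow> bool" where
  "has_class p j k \<longleftrightarrow> (10::real) powi (k - 1) \<le> p j \<and> p j < (10::real) powi k"

end

theory Submission
  imports Defs
begin

text \<open>
  Write \<open>a\<close>, \<open>b\<close> for the sums of \<open>p j * x j\<close> over grouped and ungrouped jobs, \<open>s\<close>, \<open>\<sigma>\<close>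
  for the corresponding sums of \<open>p j\<^sup>2 * x j\<close>, and \<open>Z = \<Sum>i j. p i * y i j * p j\<close>.
  Because \<open>X j\<^sup>2 = X j\<close>, twice the expected objective is \<open>E[(\<Sum>j. p j * X j)\<^sup>2] + s + \<sigma>\<close>,
  and the correlation bounds turn this into at most \<open>(a + b)\<^sup>2 + 2(s + \<sigma>)\<close> minus
  \<open>\<zeta>\<close> times the sum over groups of \<open>(\<Sum>j\<in>A. p j * x j)\<^sup>2\<close>.  Twice the SDP objective is
  \<open>Z + s + \<sigma>\<close>, and positive semidefiniteness (via a Schur complement) gives
  \<open>(a + b)\<^sup>2 \<le> Z\<close>, \<open>a\<^sup>2 + \<sigma> \<le> Z\<close> and \<open>s + \<sigma> \<le> Z\<close>.  A group of one class with mass at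
  least 1/10 has \<open>\<Sum>p\<^sup>2x \<le> 100 (\<Sum>px)\<^sup>2\<close>, so negative correlation gains at least \<open>\<zeta> s / 100\<close>;
  the ungrouped jobs have mass below 1/10 in every class, and since classes grow geometrically
  this forces \<open>b\<^sup>2 \<le> 19/45 \<sigma>\<close>.
\<close>

lemma sum_lower_triangle_symmetric:
  fixes f :: "nat \<Rightarrow> nat \<Rightarrow> 'a::comm_ring_1"
  assumes "\<And>i j. i \<in> {1..n} \<Longrightarrow> j \<in> {1..n} \<Longrightarrow> f i j = f j i"
  shows "2 * (\<Sum>j=1..n. \<Sum>i=1..j. f j i) = (\<Sum>i=1..n. \<Sum>j=1..n. f i j) + (\<Sum>i=1..n. f i i)"
  using assms
proof (induction n)
  case 0
  then show ?case by simp
next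
  case (Suc n)
  have IH: "2 * (\<Sum>j=1..n. \<Sum>i=1..j. f j i) = (\<Sum>i=1..n. \<Sum>j=1..n. f i j) + (\<Sum>i=1..n. f i i)"
    using Suc by auto
  have row_col: "(\<Sum>i=1..n. f (Suc n) i) = (\<Sum>i=1..n. f i (Suc n))"
    using Suc.prems by (intro sum.cong) auto
  have "(\<Sum>i=1..Suc n. \<Sum>j=1..Suc n. f i j) = (\<Sum>i=1..n. \<Sum>j=1..n. f i j)
      + (\<Sum>i=1..n. f i (Suc n)) + (\<Sum>j=1..n. f (Suc n) j) + f (Suc n) (Suc n)"
    by (simp add: sum.distrib)
  moreover have "(\<Sum>j=1..Suc n. \<Sum>i=1..j. f j i)
      = (\<Sum>j=1..n. \<Sum>i=1..j. f j i) + (\<Sum>i=1..n. f (Suc n) i) + f (Suc n) (Suc n)"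
    by simp
  ultimately show ?case
    using IH row_col by (simp add: algebra_simps)
qed

lemma psd_on_sdp_matrix_square_le:
  assumes "psd_on n (sdp_matrix x y)"
  shows "(\<Sum>i=1..n. v i * x i)\<^sup>2 \<le> (\<Sum>i=1..n. \<Sum>j=1..n. v i * y i j * v j)"
proof -
  define T where "T = (\<Sum>i=1..n. v i * x i)"
  define w where "w i = (if i = 0 then - T else v i)" for i
  have "0 \<le> (\<Sum>i=0..n. \<Sum>j=0..n. w i * sdp_matrix x y i j * w j)"
    using assms unfolding psd_on_def by blast
  also have "\<dots> = (\<Sum>j=0..n. w 0 * sdp_matrix x y 0 j * w j)
      + (\<Sum>i=1..n. \<Sum>j=0..n. w i * sdp_matrix x y i j * w j)"
    by (simp add: sum.atLeast_Suc_atMost)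
  also have "(\<Sum>j=0..n. w 0 * sdp_matrix x y 0 j * w j) = 0"
    by (simp add: sum.atLeast_Suc_atMost w_def sdp_matrix_def T_def sum_distrib_left sum_negf
        algebra_simps)
  also have "(\<Sum>i=1..n. \<Sum>j=0..n. w i * sdp_matrix x y i j * w j)
      = (\<Sum>i=1..n. (\<Sum>j=1..n. v i * y i j * v j) - v i * x i * T)"
    by (intro sum.cong refl) (simp add: sum.atLeast_Suc_atMost w_def sdp_matrix_def)
  also have "\<dots> = (\<Sum>i=1..n. \<Sum>j=1..n. v i * y i j * v j) - T * T"
    by (simp add: sum_subtractf T_def flip: sum_distrib_right)
  finally show ?thesis by (simp add: T_def power2_eq_square)
qed

lemma quadratic_form_shrink_le:
  fixes v p :: "'i \<Rightarrow> real" and y :: "'i \<Rightarrow> 'i \<Rightarrow> real"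
  assumes fin: "finite N" and y0: "\<And>i j. i \<in> N \<Longrightarrow> j \<in> N \<Longrightarrow> 0 \<le> y i j"
    and v: "\<And>i. i \<in> N \<Longrightarrow> 0 \<le> v i \<and> v i \<le> p i"
  shows "(\<Sum>i\<in>N. \<Sum>j\<in>N. v i * y i j * v j) + (\<Sum>i\<in>N. ((p i)\<^sup>2 - (v i)\<^sup>2) * y i i)
    \<le> (\<Sum>i\<in>N. \<Sum>j\<in>N. p i * y i j * p j)"
proof -
  have "(\<Sum>j\<in>N. v i * y i j * v j) + ((p i)\<^sup>2 - (v i)\<^sup>2) * y i i \<le> (\<Sum>j\<in>N. p i * y i j * p j)"
    if i: "i \<in> N" for i
  proof -
    have gap: "0 \<le> p i * y i j * p j - v i * y i j * v j" if j: "j \<in> N" for j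
    proof -
      have "v i * v j \<le> p i * p j" using v[OF i] v[OF j] by (intro mult_mono) auto
      then have "v i * v j * y i j \<le> p i * p j * y i j" using y0[OF i j] by (rule mult_right_mono)
      then show ?thesis by (simp add: algebra_simps)
    qed
    have "((p i)\<^sup>2 - (v i)\<^sup>2) * y i i = p i * y i i * p i - v i * y i i * v i"
      by (simp add: power2_eq_square algebra_simps)
    also have "\<dots> \<le> (\<Sum>j\<in>N. p i * y i j * p j - v i * y i j * v j)"
      using member_le_sum[of i N "\<lambda>j. p i * y i j * p j - v i * y i j * v j"] gap i fin by simp
    finally show ?thesis by (simp add: sum_subtractf)
  qed
  then show ?thesis by (simp add: sum.distrib[symmetric] sum_mono)
qed

lemma sdp_quadratic_form_ge:
  assumes psd: "psd_on n (sdp_matrix x y)"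
    and y0: "\<And>i j. i \<in> {1..n} \<Longrightarrow> j \<in> {1..n} \<Longrightarrow> 0 \<le> y i j"
    and y_diag: "\<And>i. i \<in> {1..n} \<Longrightarrow> y i i = x i"
    and p0: "\<And>i. i \<in> {1..n} \<Longrightarrow> 0 \<le> p i"
    and V: "V \<subseteq> {1..n}"
  shows "(\<Sum>i\<in>V. p i * x i)\<^sup>2 + (\<Sum>i\<in>{1..n} - V. (p i)\<^sup>2 * x i)
    \<le> (\<Sum>i=1..n. \<Sum>j=1..n. p i * y i j * p j)"
proof -
  define v where "v i = (if i \<in> V then p i else 0)" for i
  have "(\<Sum>i=1..n. v i * x i) = (\<Sum>i=1..n. if i \<in> V then p i * x i else 0)"
    by (intro sum.cong) (auto simp: v_def)
  also have "\<dots> = (\<Sum>i\<in>V. p i * x i)"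
    using V by (metis (no_types) Int_absorb1 finite_atLeastAtMost sum.inter_restrict)
  finally have grouped: "(\<Sum>i\<in>V. p i * x i) = (\<Sum>i=1..n. v i * x i)" ..
  have "(\<Sum>i=1..n. ((p i)\<^sup>2 - (v i)\<^sup>2) * y i i)
      = (\<Sum>i=1..n. if i \<in> {1..n} - V then (p i)\<^sup>2 * x i else 0)"
    by (intro sum.cong) (auto simp: v_def y_diag)
  also have "\<dots> = (\<Sum>i\<in>{1..n} - V. (p i)\<^sup>2 * x i)"
    by (metis (no_types) Diff_subset Int_absorb1 finite_atLeastAtMost sum.inter_restrict)
  finally have rest: "(\<Sum>i\<in>{1..n} - V. (p i)\<^sup>2 * x i) = (\<Sum>i=1..n. ((p i)\<^sup>2 - (v i)\<^sup>2) * y i i)" ..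
  have "(\<Sum>i=1..n. \<Sum>j=1..n. v i * y i j * v j) + (\<Sum>i=1..n. ((p i)\<^sup>2 - (v i)\<^sup>2) * y i i)
      \<le> (\<Sum>i=1..n. \<Sum>j=1..n. p i * y i j * p j)"
    by (rule quadratic_form_shrink_le) (auto simp: v_def y0 p0)
  then show ?thesis
    unfolding grouped rest using psd_on_sdp_matrix_square_le[OF psd, of v] by linarith
qed

lemma sdp_objective_double:
  fixes p x :: "nat \<Rightarrow> real" and y :: "nat \<Rightarrow> nat \<Rightarrow> real"
  assumes y_sym: "\<And>i j. i \<in> {1..n} \<Longrightarrow> j \<in> {1..n} \<Longrightarrow> y i j = y j i"
    and y_diag: "\<And>i. i \<in> {1..n} \<Longrightarrow> y i i = x i"
  shows "2 * (\<Sum>j=1..n. p j * (\<Sum>i=1..j. p i * y j i))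
    = (\<Sum>i=1..n. \<Sum>j=1..n. p i * y i j * p j) + (\<Sum>j=1..n. (p j)\<^sup>2 * x j)"
proof -
  have "2 * (\<Sum>j=1..n. p j * (\<Sum>i=1..j. p i * y j i)) = 2 * (\<Sum>j=1..n. \<Sum>i=1..j. p j * y j i * p i)"
    by (simp add: sum_distrib_left mult_ac)
  also have "\<dots> = (\<Sum>i=1..n. \<Sum>j=1..n. p i * y i j * p j) + (\<Sum>i=1..n. p i * y i i * p i)"
    using y_sym by (intro sum_lower_triangle_symmetric) simp
  finally show ?thesis
    using y_diag by (simp add: power2_eq_square mult_ac)
qed

text \<open>Classes of jobs with \<open>p j \<ge> 1\<close> are positive, so they are indexed here by naturals;
  see \<open>has_class_job_class\<close>.\<close>

definition job_class :: "(nat \<Rightarrow> real) \<Rightarrow> nat \<Rightarrow> nat" where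
  "job_class p j = (LEAST k. p j < 10 ^ k)"

lemma job_class_less: "p j < 10 ^ job_class p j"
  unfolding job_class_def using real_arch_pow[of 10 "p j"] by (auto intro: LeastI_ex)

lemma job_class_le: "p j < 10 ^ k \<Longrightarrow> job_class p j \<le> k"
  unfolding job_class_def by (rule Least_le)

lemma job_class_pos: "1 \<le> p j \<Longrightarrow> 1 \<le> job_class p j"
  using job_class_less[of p j] by (cases "job_class p j") auto

lemma job_class_lower: "1 \<le> p j \<Longrightarrow> 10 ^ (job_class p j - 1) \<le> p j"
  using job_class_le[of p j "job_class p j - 1"] job_class_pos[of p j] by force

lemma job_class_mono: "p j \<le> p i \<Longrightarrow> job_class p j \<le> job_class p i"
  using job_class_less[of p i] by (intro job_class_le) simp

lemma has_class_job_class: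
  assumes "1 \<le> p j"
  shows "has_class p j (int (job_class p j))"
proof -
  have "int (job_class p j) - 1 = int (job_class p j - 1)"
    using job_class_pos[of p j, OF assms] by simp
  then show ?thesis
    using job_class_lower[of p j, OF assms] job_class_less[of p j]
    by (simp add: has_class_def del: of_nat_diff)
qed

lemma lower_classes_weight_le:
  assumes fin: "finite B" and x0: "\<And>j. j \<in> B \<Longrightarrow> 0 \<le> x j"
    and light: "\<And>m. (\<Sum>j\<in>{j\<in>B. job_class p j = m}. x j) \<le> 1/10"
  shows "(\<Sum>j\<in>{j\<in>B. job_class p j < k}. p j * x j) \<le> (10 ^ k - 1) / 90"
proof -
  have "(\<Sum>j\<in>{j\<in>B. job_class p j < k}. p j * x j)
      \<le> (\<Sum>j\<in>{j\<in>B. job_class p j < k}. 10 ^ job_class p j * x j)"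
    by (intro sum_mono mult_right_mono) (auto intro: x0 less_imp_le[OF job_class_less])
  also have "\<dots> = (\<Sum>m<k. \<Sum>j\<in>{j\<in>{j\<in>B. job_class p j < k}. job_class p j = m}. 10 ^ job_class p j * x j)"
    by (rule sum.group[symmetric]) (auto simp: fin)
  also have "\<dots> = (\<Sum>m<k. \<Sum>j\<in>{j\<in>B. job_class p j = m}. 10 ^ m * x j)"
    by (intro sum.cong) auto
  also have "\<dots> \<le> (\<Sum>m<k. 10 ^ m * (1/10))"
  proof (rule sum_mono)
    fix m
    show "(\<Sum>j\<in>{j\<in>B. job_class p j = m}. 10 ^ m * x j) \<le> 10 ^ m * (1/10)"
      using mult_left_mono[OF light[of m], of "10 ^ m"] by (simp add: sum_distrib_left)
  qed
  also have "\<dots> = (10 ^ k - 1) / 90"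
    using geometric_sum[of "10::real" k] by (simp flip: sum_divide_distrib)
  finally show ?thesis .
qed

lemma light_classes_prefix_weight_le:
  assumes fin: "finite B" and p1: "\<And>j. j \<in> B \<Longrightarrow> 1 \<le> p j"
    and x0: "\<And>j. j \<in> B \<Longrightarrow> 0 \<le> x j"
    and light: "\<And>m. (\<Sum>j\<in>{j\<in>B. job_class p j = m}. x j) \<le> 1/10"
    and i: "i \<in> B"
  shows "(\<Sum>j\<in>{j\<in>B. p j \<le> p i}. p j * x j) \<le> 19/90 * p i"
proof -
  have p0: "0 \<le> p j" if "j \<in> B" for j
    using p1[OF that] by simp
  define k where "k = job_class p i"
  define Q where "Q = {j\<in>B. p j \<le> p i}"
  have split: "(\<Sum>j\<in>Q. p j * x j)
      = (\<Sum>j\<in>{j\<in>Q. job_class p j = k}. p j * x j) + (\<Sum>j\<in>{j\<in>Q. job_class p j < k}. p j * x j)"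
  proof -
    have "Q = {j\<in>Q. job_class p j = k} \<union> {j\<in>Q. job_class p j < k}"
      using job_class_mono[of p _ i] by (fastforce simp: Q_def k_def)
    then have "sum (\<lambda>j. p j * x j) Q
        = sum (\<lambda>j. p j * x j) ({j\<in>Q. job_class p j = k} \<union> {j\<in>Q. job_class p j < k})"
      by (rule arg_cong)
    also have "\<dots> = (\<Sum>j\<in>{j\<in>Q. job_class p j = k}. p j * x j) + (\<Sum>j\<in>{j\<in>Q. job_class p j < k}. p j * x j)"
      using fin by (intro sum.union_disjoint) (auto simp: Q_def)
    finally show ?thesis .
  qed
  have "(\<Sum>j\<in>{j\<in>Q. job_class p j = k}. p j * x j) \<le> (\<Sum>j\<in>{j\<in>Q. job_class p j = k}. p i * x j)"
    using x0 by (intro sum_mono mult_right_mono) (auto simp: Q_def)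
  also have "\<dots> \<le> (\<Sum>j\<in>{j\<in>B. job_class p j = k}. p i * x j)"
    using fin p1[OF i] x0 by (intro sum_mono2) (auto simp: Q_def)
  also have "\<dots> \<le> p i / 10"
    using light[of k] p1[OF i] by (simp add: mult_left_mono flip: sum_distrib_left)
  finally have same: "(\<Sum>j\<in>{j\<in>Q. job_class p j = k}. p j * x j) \<le> p i / 10" .
  have "(\<Sum>j\<in>{j\<in>Q. job_class p j < k}. p j * x j) \<le> (\<Sum>j\<in>{j\<in>B. job_class p j < k}. p j * x j)"
    using fin p1 x0 by (intro sum_mono2) (auto simp: Q_def intro!: mult_nonneg_nonneg p0)
  also have "\<dots> \<le> (10 ^ k - 1) / 90"
    by (rule lower_classes_weight_le[OF fin x0 light])
  also have "\<dots> \<le> p i / 9"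
    using job_class_lower[of p i, OF p1[OF i]] job_class_pos[of p i, OF p1[OF i]]
    by (simp add: k_def power_eq_if split: if_splits)
  finally show ?thesis using split same by (simp add: Q_def)
qed

lemma light_classes_weight_sq_le:
  assumes fin: "finite B" and p1: "\<And>j. j \<in> B \<Longrightarrow> 1 \<le> p j"
    and x0: "\<And>j. j \<in> B \<Longrightarrow> 0 \<le> x j"
    and light: "\<And>k. (\<Sum>j\<in>{j\<in>B. has_class p j k}. x j) \<le> 1/10"
  shows "(\<Sum>j\<in>B. p j * x j)\<^sup>2 \<le> 19/45 * (\<Sum>j\<in>B. (p j)\<^sup>2 * x j)"
proof -
  have light_class: "(\<Sum>j\<in>{j\<in>B. job_class p j = m}. x j) \<le> 1/10" for m
  proof -
    have "(\<Sum>j\<in>{j\<in>B. job_class p j = m}. x j) \<le> (\<Sum>j\<in>{j\<in>B. has_class p j (int m)}. x j)"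
      using fin x0 has_class_job_class p1 by (intro sum_mono2) auto
    then show ?thesis using light[of "int m"] by linarith
  qed
  define u where "u j = p j * x j" for j
  have u0: "0 \<le> u j" if "j \<in> B" for j
    using p1[OF that] x0[OF that] by (simp add: u_def)
  \<comment> \<open>charge each product \<open>u i * u j\<close> to the job with the larger processing time\<close>
  define F where "F i j = (if p j \<le> p i then u i * u j else 0)" for i j
  have "(\<Sum>j\<in>B. u j)\<^sup>2 = (\<Sum>i\<in>B. \<Sum>j\<in>B. u i * u j)"
    by (simp add: power2_eq_square sum_product)
  also have "\<dots> \<le> (\<Sum>i\<in>B. \<Sum>j\<in>B. F i j + F j i)"
    by (intro sum_mono) (auto simp: F_def u0 mult.commute)
  also have "\<dots> = 2 * (\<Sum>i\<in>B. \<Sum>j\<in>B. F i j)"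
    by (simp add: sum.distrib sum.swap[of "\<lambda>i j. F j i"])
  also have "(\<Sum>i\<in>B. \<Sum>j\<in>B. F i j) = (\<Sum>i\<in>B. u i * (\<Sum>j\<in>{j\<in>B. p j \<le> p i}. p j * x j))"
    by (intro sum.cong refl)
      (auto simp: sum.inter_filter[OF fin] F_def sum_distrib_left u_def intro!: sum.cong)
  finally have "(\<Sum>j\<in>B. u j)\<^sup>2 \<le> 2 * (\<Sum>i\<in>B. u i * (\<Sum>j\<in>{j\<in>B. p j \<le> p i}. p j * x j))" .
  moreover have "(\<Sum>i\<in>B. u i * (\<Sum>j\<in>{j\<in>B. p j \<le> p i}. p j * x j)) \<le> (\<Sum>i\<in>B. u i * (19/90 * p i))"
    by (intro sum_mono mult_left_mono light_classes_prefix_weight_le[OF fin p1 x0 light_class])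
      (auto intro: u0)
  moreover have "2 * (\<Sum>i\<in>B. u i * (19/90 * p i)) = 19/45 * (\<Sum>j\<in>B. (p j)\<^sup>2 * x j)"
    by (simp add: u_def sum_distrib_left power2_eq_square mult_ac)
  ultimately show ?thesis by (simp add: u_def)
qed

lemma narrow_group_second_moment_le:
  fixes p x :: "'i \<Rightarrow> real"
  assumes fin: "finite A" and L: "0 < L"
    and narrow: "\<And>j. j \<in> A \<Longrightarrow> L \<le> p j \<and> p j < 10 * L"
    and x0: "\<And>j. j \<in> A \<Longrightarrow> 0 \<le> x j" and mass: "1/10 \<le> (\<Sum>j\<in>A. x j)"
  shows "(\<Sum>j\<in>A. (p j)\<^sup>2 * x j) \<le> 100 * (\<Sum>j\<in>A. p j * x j)\<^sup>2"
proof -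
  define V where "V = (\<Sum>j\<in>A. p j * x j)"
  have "L / 10 \<le> (\<Sum>j\<in>A. L * x j)"
    using mult_left_mono[OF mass, of L] L by (simp add: sum_distrib_left)
  also have "\<dots> \<le> V"
    unfolding V_def using narrow x0 by (intro sum_mono mult_right_mono) auto
  finally have LV: "L / 10 \<le> V" .
  have "(\<Sum>j\<in>A. (p j)\<^sup>2 * x j) \<le> (\<Sum>j\<in>A. 10 * L * (p j * x j))"
  proof (rule sum_mono)
    fix j assume j: "j \<in> A"
    have "p j * (p j * x j) \<le> 10 * L * (p j * x j)"
      using narrow[OF j] x0[OF j] L by (intro mult_right_mono) auto
    then show "(p j)\<^sup>2 * x j \<le> 10 * L * (p j * x j)"
      by (simp add: power2_eq_square mult_ac)
  qed
  also have "\<dots> = 10 * L * V"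
    by (simp add: V_def sum_distrib_left)
  also have "\<dots> \<le> 100 * V * V"
    using LV L by (intro mult_right_mono) auto
  finally show ?thesis by (simp add: V_def power2_eq_square)
qed

lemma single_class_second_moment_le:
  assumes "finite A" and "\<forall>j\<in>A. has_class p j k"
    and "\<And>j. j \<in> A \<Longrightarrow> 0 \<le> x j" and "1/10 \<le> (\<Sum>j\<in>A. x j)"
  shows "(\<Sum>j\<in>A. (p j)\<^sup>2 * x j) \<le> 100 * (\<Sum>j\<in>A. p j * x j)\<^sup>2"
proof (rule narrow_group_second_moment_le)
  have "(10::real) powi k = 10 * 10 powi (k - 1)"
    using power_int_add_1'[of "10::real" "k - 1"] by simp
  then show "\<And>j. j \<in> A \<Longrightarrow> 10 powi (k - 1) \<le> p j \<and> p j < 10 * 10 powi (k - 1)"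
    using assms(2) by (auto simp: has_class_def)
qed (use assms in auto)

lemma grouped_second_moment_le:
  fixes \<G> :: "nat set set"
  assumes fin: "finite \<G>" "\<And>A. A \<in> \<G> \<Longrightarrow> finite A"
    and disj: "\<And>A B. A \<in> \<G> \<Longrightarrow> B \<in> \<G> \<Longrightarrow> A \<noteq> B \<Longrightarrow> A \<inter> B = {}"
    and single_class: "\<And>A. A \<in> \<G> \<Longrightarrow> \<exists>k. \<forall>j\<in>A. has_class p j k"
    and mass: "\<And>A. A \<in> \<G> \<Longrightarrow> 1/10 \<le> (\<Sum>j\<in>A. x j)"
    and x0: "\<And>j. j \<in> \<Union>\<G> \<Longrightarrow> 0 \<le> x j"
  shows "(\<Sum>j\<in>\<Union>\<G>. (p j)\<^sup>2 * x j) \<le> 100 * (\<Sum>A\<in>\<G>. (\<Sum>j\<in>A. p j * x j)\<^sup>2)"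
proof -
  have "(\<Sum>j\<in>\<Union>\<G>. (p j)\<^sup>2 * x j) = (\<Sum>A\<in>\<G>. \<Sum>j\<in>A. (p j)\<^sup>2 * x j)"
    using fin disj by (subst sum.Union_disjoint) auto
  also have "\<dots> \<le> (\<Sum>A\<in>\<G>. 100 * (\<Sum>j\<in>A. p j * x j)\<^sup>2)"
  proof (rule sum_mono)
    fix A assume A: "A \<in> \<G>"
    then obtain k where "\<forall>j\<in>A. has_class p j k" using single_class by blast
    moreover have "0 \<le> x j" if "j \<in> A" for j
      using A that by (intro x0) blast
    ultimately show "(\<Sum>j\<in>A. (p j)\<^sup>2 * x j) \<le> 100 * (\<Sum>j\<in>A. p j * x j)\<^sup>2"
      using A fin mass by (intro single_class_second_moment_le) auto
  qed
  finally show ?thesis by (simp add: sum_distrib_left)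
qed

definition same_group :: "'i set set \<Rightarrow> 'i \<Rightarrow> 'i \<Rightarrow> bool" where
  "same_group \<G> i j \<longleftrightarrow> (\<exists>A\<in>\<G>. i \<in> A \<and> j \<in> A)"

lemma sum_squares_groups_eq:
  fixes u :: "'i \<Rightarrow> 'a::comm_semiring_1"
  assumes fin: "finite N" and sub: "\<And>A. A \<in> \<G> \<Longrightarrow> A \<subseteq> N"
    and disj: "\<And>A B. A \<in> \<G> \<Longrightarrow> B \<in> \<G> \<Longrightarrow> A \<noteq> B \<Longrightarrow> A \<inter> B = {}"
  shows "(\<Sum>A\<in>\<G>. (\<Sum>i\<in>A. u i)\<^sup>2) = (\<Sum>i\<in>N. \<Sum>j\<in>N. if same_group \<G> i j then u i * u j else 0)"
proof -
  define F where "F i = (\<Sum>j\<in>N. if same_group \<G> i j then u i * u j else 0)" for i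
  have fin_sets: "finite \<G>" "\<And>A. A \<in> \<G> \<Longrightarrow> finite A"
    using sub fin finite_subset[of \<G> "Pow N"] by (auto intro: finite_subset)
  have row: "(\<Sum>j\<in>A. u i * u j) = F i" if "A \<in> \<G>" "i \<in> A" for A i
  proof -
    have "same_group \<G> i j \<longleftrightarrow> j \<in> A" for j
      using that disj by (auto simp: same_group_def)
    then show ?thesis
      using sub[OF that(1)] fin by (simp add: F_def sum.inter_restrict[symmetric] Int_absorb1)
  qed
  have square: "(\<Sum>i\<in>A. u i)\<^sup>2 = (\<Sum>i\<in>A. F i)" if A: "A \<in> \<G>" for A
  proof -
    have "(\<Sum>i\<in>A. u i)\<^sup>2 = (\<Sum>i\<in>A. \<Sum>j\<in>A. u i * u j)"
      by (simp add: power2_eq_square sum_product)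
    also have "\<dots> = (\<Sum>i\<in>A. F i)"
      by (intro sum.cong refl) (rule row[OF A])
    finally show ?thesis .
  qed
  have "(\<Sum>A\<in>\<G>. (\<Sum>i\<in>A. u i)\<^sup>2) = (\<Sum>A\<in>\<G>. \<Sum>i\<in>A. F i)"
    by (intro sum.cong refl) (rule square)
  also have "\<dots> = (\<Sum>i\<in>\<Union>\<G>. F i)"
    using fin_sets disj by (subst sum.Union_disjoint) auto
  also have "\<dots> = (\<Sum>i\<in>N. F i)"
    using fin sub by (intro sum.mono_neutral_left) (auto simp: F_def same_group_def)
  finally show ?thesis by (simp add: F_def)
qed

lemma pairwise_moment_sum_le:
  fixes m :: "'i \<Rightarrow> 'i \<Rightarrow> real"
  assumes fin: "finite N" and sub: "\<And>A. A \<in> \<G> \<Longrightarrow> A \<subseteq> N"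
    and disj: "\<And>A B. A \<in> \<G> \<Longrightarrow> B \<in> \<G> \<Longrightarrow> A \<noteq> B \<Longrightarrow> A \<inter> B = {}"
    and p0: "\<And>i. i \<in> N \<Longrightarrow> 0 \<le> p i" and \<zeta>: "\<zeta> \<le> 1"
    and diag: "\<And>i. i \<in> N \<Longrightarrow> m i i = x i"
    and pair: "\<And>i j. i \<in> N \<Longrightarrow> j \<in> N \<Longrightarrow> i \<noteq> j \<Longrightarrow> m i j \<le> x i * x j"
    and pair_group: "\<And>A i j. A \<in> \<G> \<Longrightarrow> i \<in> A \<Longrightarrow> j \<in> A \<Longrightarrow> i \<noteq> j \<Longrightarrow>
      m i j \<le> (1 - \<zeta>) * x i * x j"
  shows "(\<Sum>i\<in>N. \<Sum>j\<in>N. p i * p j * m i j)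
    \<le> (\<Sum>i\<in>N. p i * x i)\<^sup>2 + (\<Sum>i\<in>N. (p i)\<^sup>2 * x i) - \<zeta> * (\<Sum>A\<in>\<G>. (\<Sum>i\<in>A. p i * x i)\<^sup>2)"
proof -
  define u where "u i = p i * x i" for i
  define g where "g i j = (if same_group \<G> i j then u i * u j else 0)" for i j
  have bound: "p i * p j * m i j \<le> u i * u j + (if i = j then (p i)\<^sup>2 * x i else 0) - \<zeta> * g i j"
    if i: "i \<in> N" and j: "j \<in> N" for i j
  proof (cases "i = j")
    case True
    have "\<zeta> * g i i \<le> u i * u i"
      using \<zeta> mult_right_mono[OF \<zeta>, of "u i * u i"] by (simp add: g_def)
    then show ?thesis
      using True diag[OF i] by (simp add: power2_eq_square)
  next
    case False
    have "m i j \<le> (1 - (if same_group \<G> i j then \<zeta> else 0)) * x i * x j"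
      using pair[OF i j False] pair_group[OF _ _ _ False] by (auto simp: same_group_def)
    then have "p i * p j * m i j \<le> p i * p j * ((1 - (if same_group \<G> i j then \<zeta> else 0)) * x i * x j)"
      using p0[OF i] p0[OF j] by (intro mult_left_mono) auto
    then show ?thesis
      using False by (cases "same_group \<G> i j") (simp_all add: g_def u_def algebra_simps)
  qed
  have "(\<Sum>i\<in>N. \<Sum>j\<in>N. p i * p j * m i j)
      \<le> (\<Sum>i\<in>N. \<Sum>j\<in>N. u i * u j + (if i = j then (p i)\<^sup>2 * x i else 0) - \<zeta> * g i j)"
    using bound by (intro sum_mono) auto
  also have "\<dots> = (\<Sum>i\<in>N. \<Sum>j\<in>N. u i * u j) + (\<Sum>i\<in>N. (p i)\<^sup>2 * x i)
      - \<zeta> * (\<Sum>i\<in>N. \<Sum>j\<in>N. g i j)"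
    using fin by (simp add: sum.distrib sum_subtractf sum_distrib_left)
  also have "(\<Sum>i\<in>N. \<Sum>j\<in>N. u i * u j) = (\<Sum>i\<in>N. u i)\<^sup>2"
    by (simp add: power2_eq_square sum_product)
  also have "(\<Sum>i\<in>N. \<Sum>j\<in>N. g i j) = (\<Sum>A\<in>\<G>. (\<Sum>i\<in>A. u i)\<^sup>2)"
    unfolding g_def by (rule sum_squares_groups_eq[OF fin sub disj, symmetric])
  finally show ?thesis by (simp add: u_def)
qed

lemma (in prob_space) expectation_prefix_products:
  fixes X :: "nat \<Rightarrow> 'a \<Rightarrow> real" and p :: "nat \<Rightarrow> real"
  assumes meas: "\<And>j. j \<in> {1..n} \<Longrightarrow> X j \<in> borel_measurable M"
    and X01: "\<And>j \<omega>. j \<in> {1..n} \<Longrightarrow> \<omega> \<in> space M \<Longrightarrow> X j \<omega> \<in> {0, 1}"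
  shows "2 * (\<integral>\<omega>. (\<Sum>j=1..n. p j * X j \<omega> * (\<Sum>i=1..j. p i * X i \<omega>)) \<partial>M)
    = (\<Sum>i=1..n. \<Sum>j=1..n. p i * p j * (\<integral>\<omega>. X i \<omega> * X j \<omega> \<partial>M))
      + (\<Sum>j=1..n. (p j)\<^sup>2 * (\<integral>\<omega>. X j \<omega> * X j \<omega> \<partial>M))"
proof -
  define c where "c i j = p i * p j + (if i = j then (p i)\<^sup>2 else 0)" for i j
  have int: "integrable M (\<lambda>\<omega>. X i \<omega> * X j \<omega>)" if "i \<in> {1..n}" "j \<in> {1..n}" for i j
  proof (rule integrable_const_bound[where B = 1])
    show "AE \<omega> in M. norm (X i \<omega> * X j \<omega>) \<le> 1"
    proof (rule AE_I2)
      fix \<omega> assume "\<omega> \<in> space M"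
      then have "X i \<omega> \<in> {0, 1}" "X j \<omega> \<in> {0, 1}"
        using X01 that by auto
      then show "norm (X i \<omega> * X j \<omega>) \<le> 1" by auto
    qed
  qed (use meas that in simp)
  have "2 * (\<Sum>j=1..n. p j * X j \<omega> * (\<Sum>i=1..j. p i * X i \<omega>))
      = (\<Sum>i=1..n. \<Sum>j=1..n. c i j * (X i \<omega> * X j \<omega>))" for \<omega>
  proof -
    define f where "f i j = p i * p j * (X i \<omega> * X j \<omega>)" for i j
    have "2 * (\<Sum>j=1..n. p j * X j \<omega> * (\<Sum>i=1..j. p i * X i \<omega>)) = 2 * (\<Sum>j=1..n. \<Sum>i=1..j. f j i)"
      by (simp add: f_def sum_distrib_left mult_ac)
    also have "\<dots> = (\<Sum>i=1..n. \<Sum>j=1..n. f i j) + (\<Sum>i=1..n. f i i)"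
      by (rule sum_lower_triangle_symmetric) (simp add: f_def mult_ac)
    also have "\<dots> = (\<Sum>i=1..n. \<Sum>j=1..n. c i j * (X i \<omega> * X j \<omega>))"
      by (simp add: f_def c_def distrib_right sum.distrib power2_eq_square if_distrib[of "\<lambda>z. z * _"]
          cong: if_cong)
    finally show ?thesis .
  qed
  then have "2 * (\<integral>\<omega>. (\<Sum>j=1..n. p j * X j \<omega> * (\<Sum>i=1..j. p i * X i \<omega>)) \<partial>M)
      = (\<integral>\<omega>. (\<Sum>i=1..n. \<Sum>j=1..n. c i j * (X i \<omega> * X j \<omega>)) \<partial>M)"
    by (simp flip: integral_mult_right_zero)
  also have "\<dots> = (\<Sum>i=1..n. \<integral>\<omega>. (\<Sum>j=1..n. c i j * (X i \<omega> * X j \<omega>)) \<partial>M)"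
    by (rule Bochner_Integration.integral_sum)
      (intro Bochner_Integration.integrable_sum integrable_mult_right int; simp)
  also have "\<dots> = (\<Sum>i=1..n. \<Sum>j=1..n. c i j * (\<integral>\<omega>. X i \<omega> * X j \<omega> \<partial>M))"
    by (intro sum.cong refl, subst Bochner_Integration.integral_sum) (auto intro: int)
  also have "\<dots> = (\<Sum>i=1..n. \<Sum>j=1..n. p i * p j * (\<integral>\<omega>. X i \<omega> * X j \<omega> \<partial>M))
      + (\<Sum>j=1..n. (p j)\<^sup>2 * (\<integral>\<omega>. X j \<omega> * X j \<omega> \<partial>M))"
    by (simp add: c_def distrib_right sum.distrib if_distrib[of "\<lambda>z. z * _"] cong: if_cong)
  finally show ?thesis .
qed

lemma (in prob_space) expected_objective_le:
  fixes X :: "nat \<Rightarrow> 'a \<Rightarrow> real" and p x :: "nat \<Rightarrow> real"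
  assumes sub: "\<And>A. A \<in> \<G> \<Longrightarrow> A \<subseteq> {1..n}"
    and disj: "\<And>A B. A \<in> \<G> \<Longrightarrow> B \<in> \<G> \<Longrightarrow> A \<noteq> B \<Longrightarrow> A \<inter> B = {}"
    and p0: "\<And>j. j \<in> {1..n} \<Longrightarrow> 0 \<le> p j" and \<zeta>: "\<zeta> \<le> 1"
    and meas: "\<And>j. j \<in> {1..n} \<Longrightarrow> X j \<in> borel_measurable M"
    and X01: "\<And>j \<omega>. j \<in> {1..n} \<Longrightarrow> \<omega> \<in> space M \<Longrightarrow> X j \<omega> \<in> {0, 1}"
    and mean: "\<And>j. j \<in> {1..n} \<Longrightarrow> (\<integral>\<omega>. X j \<omega> \<partial>M) = x j"
    and corr: "\<And>i j. i \<in> {1..n} \<Longrightarrow> j \<in> {1..n} \<Longrightarrow> i \<noteq> j \<Longrightarrow>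
      (\<integral>\<omega>. X i \<omega> * X j \<omega> \<partial>M) \<le> x i * x j"
    and corr_group: "\<And>A i j. A \<in> \<G> \<Longrightarrow> i \<in> A \<Longrightarrow> j \<in> A \<Longrightarrow> i \<noteq> j \<Longrightarrow>
      (\<integral>\<omega>. X i \<omega> * X j \<omega> \<partial>M) \<le> (1 - \<zeta>) * x i * x j"
  shows "2 * (\<integral>\<omega>. (\<Sum>j=1..n. p j * X j \<omega> * (\<Sum>i=1..j. p i * X i \<omega>)) \<partial>M)
    \<le> (\<Sum>j=1..n. p j * x j)\<^sup>2 + 2 * (\<Sum>j=1..n. (p j)\<^sup>2 * x j) - \<zeta> * (\<Sum>A\<in>\<G>. (\<Sum>j\<in>A. p j * x j)\<^sup>2)"
proof -
  have square: "(\<integral>\<omega>. X j \<omega> * X j \<omega> \<partial>M) = x j" if "j \<in> {1..n}" for j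
  proof -
    have "(\<integral>\<omega>. X j \<omega> * X j \<omega> \<partial>M) = (\<integral>\<omega>. X j \<omega> \<partial>M)"
      using X01[OF that] by (intro Bochner_Integration.integral_cong) force+
    then show ?thesis using mean[OF that] by simp
  qed
  have "(\<Sum>i=1..n. \<Sum>j=1..n. p i * p j * (\<integral>\<omega>. X i \<omega> * X j \<omega> \<partial>M))
      \<le> (\<Sum>j=1..n. p j * x j)\<^sup>2 + (\<Sum>j=1..n. (p j)\<^sup>2 * x j) - \<zeta> * (\<Sum>A\<in>\<G>. (\<Sum>j\<in>A. p j * x j)\<^sup>2)"
    by (rule pairwise_moment_sum_le) (use sub disj p0 \<zeta> square corr corr_group in auto)
  then show ?thesis
    using expectation_prefix_products[OF meas X01] square by simp
qed

lemma ratio_estimate: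
  fixes a b s \<sigma> Z c :: real
  assumes c: "0 \<le> c" "c \<le> 1/100" and s0: "0 \<le> s"
    and total: "(a + b)\<^sup>2 \<le> Z" and grouped: "a\<^sup>2 + \<sigma> \<le> Z" and diag: "s + \<sigma> \<le> Z"
    and light: "b\<^sup>2 \<le> 19/45 * \<sigma>"
  shows "(a + b)\<^sup>2 + 2 * (s + \<sigma>) - 200 * c * s \<le> (3/2 - c) * (s + \<sigma> + Z)"
proof -
  define S where "S = s + \<sigma>"
  have "0 \<le> \<sigma>"
    using light zero_le_power2[of b] by linarith
  then have S0: "0 \<le> S"
    using s0 by (simp add: S_def)
  have cs: "0 \<le> c * s" and cS: "0 \<le> c * S" "c * S \<le> S / 100"
    using c s0 S0 mult_right_mono[OF c(2) S0] by simp_all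
  \<comment> \<open>either \<open>s\<close> is a 1/100 share of \<open>S\<close>, or \<open>Z\<close> exceeds \<open>S\<close> by \<open>5 c S\<close>; otherwise
    \<open>a\<^sup>2 \<le> Z - \<sigma>\<close> is tiny and \<open>(a + b)\<^sup>2 \<le> 2 a\<^sup>2 + 2 b\<^sup>2\<close> stays below \<open>S - 2 c S\<close>\<close>
  consider (heavy) "S \<le> 100 * s" | (spread) "5 * (c * S) \<le> Z - S"
    | (tight) "100 * s < S" "Z - S < 5 * (c * S)"
    by linarith
  then show ?thesis
  proof cases
    case heavy
    have "c * S \<le> 100 * (c * s)"
      using mult_left_mono[OF heavy c(1)] by simp
    moreover have "(1/2 - c) * S \<le> (1/2 - c) * Z"
      using diag c by (intro mult_left_mono) (auto simp: S_def)
    ultimately show ?thesis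
      using total unfolding S_def[symmetric] by (simp add: algebra_simps)
  next
    case spread
    have "c * (Z - S) \<le> (Z - S) / 100"
      using mult_right_mono[OF c(2), of "Z - S"] diag by (simp add: S_def)
    moreover have "(3/2 - c) * (S + Z) = 3/2 * S + 3/2 * Z - c * S - c * Z"
      by (simp add: algebra_simps)
    ultimately show ?thesis
      using total spread cs cS unfolding S_def[symmetric] by (simp add: right_diff_distrib)
  next
    case tight
    have "(a + b)\<^sup>2 \<le> 2 * a\<^sup>2 + 2 * b\<^sup>2"
      using zero_le_power2[of "a - b"] by (simp add: power2_eq_square algebra_simps)
    moreover have "(3/2 - c) * (S + S) \<le> (3/2 - c) * (S + Z)"
      using diag c by (intro mult_left_mono) (auto simp: S_def)
    ultimately show ?thesis
      using tight grouped light cs cS s0 by (simp add: S_def algebra_simps)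
  qed
qed

theorem mainTheorem9:
  fixes \<zeta> :: real and n' :: nat
    and p x :: "nat \<Rightarrow> real" and y :: "nat \<Rightarrow> nat \<Rightarrow> real"
    and \<G> :: "nat set set"
    and M :: "'a measure" and X :: "nat \<Rightarrow> 'a \<Rightarrow> real"
  assumes zeta: "0 < \<zeta>" "\<zeta> \<le> 1"
    and n_pos: "n' \<ge> 1"
    and p_ge: "\<And>j. j \<in> {1..n'} \<Longrightarrow> p j \<ge> 1"
    and x_range: "\<And>j. j \<in> {1..n'} \<Longrightarrow> 0 \<le> x j \<and> x j \<le> 1"
    and y_sym: "\<And>j j'. j \<in> {1..n'} \<Longrightarrow> j' \<in> {1..n'} \<Longrightarrow> y j j' = y j' j"
    and y_nonneg: "\<And>j j'. j \<in> {1..n'} \<Longrightarrow> j' \<in> {1..n'} \<Longrightarrow> y j j' \<ge> 0"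
    and y_diag: "\<And>j. j \<in> {1..n'} \<Longrightarrow> y j j = x j"
    and psd: "psd_on n' (sdp_matrix x y)"
    and G_disj: "\<And>A B. A \<in> \<G> \<Longrightarrow> B \<in> \<G> \<Longrightarrow> A \<noteq> B \<Longrightarrow> A \<inter> B = {}"
    and G_sub: "\<And>A. A \<in> \<G> \<Longrightarrow> A \<noteq> {} \<and> A \<subseteq> {1..n'}"
    and G_class: "\<And>A. A \<in> \<G> \<Longrightarrow> \<exists>k. \<forall>j\<in>A. has_class p j k"
    and G_mass: "\<And>A. A \<in> \<G> \<Longrightarrow> (\<Sum>j\<in>A. x j) \<ge> 1/10"
    and Gbar_small: "\<And>k. (\<Sum>j\<in>{j\<in>{1..n'} - \<Union>\<G>. has_class p j k}. x j) < 1/10"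
    and M: "prob_space M"
    and X_meas: "\<And>j. j \<in> {1..n'} \<Longrightarrow> X j \<in> borel_measurable M"
    and X_01: "\<And>j \<omega>. j \<in> {1..n'} \<Longrightarrow> \<omega> \<in> space M \<Longrightarrow> X j \<omega> \<in> {0, 1}"
    and X_mean: "\<And>j. j \<in> {1..n'} \<Longrightarrow> (\<integral>\<omega>. X j \<omega> \<partial>M) = x j"
    and X_corr: "\<And>j j'. j \<in> {1..n'} \<Longrightarrow> j' \<in> {1..n'} \<Longrightarrow> j \<noteq> j' \<Longrightarrow>
                   (\<integral>\<omega>. X j \<omega> * X j' \<omega> \<partial>M) \<le> x j * x j'"
    and X_corr_G: "\<And>A j j'. A \<in> \<G> \<Longrightarrow> j \<in> A \<Longrightarrow> j' \<in> A \<Longrightarrow> j \<noteq> j' \<Longrightarrow>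
                   (\<integral>\<omega>. X j \<omega> * X j' \<omega> \<partial>M) \<le> (1 - \<zeta>) * x j * x j'"
  shows "(\<integral>\<omega>. (\<Sum>j=1..n'. p j * X j \<omega> * (\<Sum>i=1..j. p i * X i \<omega>)) \<partial>M)
         \<le> (3/2 - \<zeta> / 20000) * (\<Sum>j=1..n'. p j * (\<Sum>i=1..j. p i * y j i))"
proof -
  interpret prob_space M by (rule M)
  define a where "a = (\<Sum>j\<in>\<Union>\<G>. p j * x j)"
  define b where "b = (\<Sum>j\<in>{1..n'} - \<Union>\<G>. p j * x j)"
  define s where "s = (\<Sum>j\<in>\<Union>\<G>. (p j)\<^sup>2 * x j)"
  define \<sigma> where "\<sigma> = (\<Sum>j\<in>{1..n'} - \<Union>\<G>. (p j)\<^sup>2 * x j)"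
  define Z where "Z = (\<Sum>i=1..n'. \<Sum>j=1..n'. p i * y i j * p j)"
  have groups_sub: "\<And>A. A \<in> \<G> \<Longrightarrow> A \<subseteq> {1..n'}"
    using G_sub by blast
  have grouped_sub: "\<Union>\<G> \<subseteq> {1..n'}" and fin_groups: "finite \<G>" "\<And>A. A \<in> \<G> \<Longrightarrow> finite A"
    using G_sub finite_subset[of \<G> "Pow {1..n'}"] by (auto intro: finite_subset)
  have p0: "\<And>j. j \<in> {1..n'} \<Longrightarrow> 0 \<le> p j" and x0: "\<And>j. j \<in> {1..n'} \<Longrightarrow> 0 \<le> x j"
    using p_ge x_range by (auto intro: order_trans[OF zero_le_one])
  have "(\<Sum>j=1..n'. f j) = (\<Sum>j\<in>\<Union>\<G>. f j) + (\<Sum>j\<in>{1..n'} - \<Union>\<G>. f j)" for f :: "nat \<Rightarrow> real"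
    using sum.subset_diff[OF grouped_sub finite_atLeastAtMost, of f] by linarith
  then have split: "(\<Sum>j=1..n'. p j * x j) = a + b" "(\<Sum>j=1..n'. (p j)\<^sup>2 * x j) = s + \<sigma>"
    unfolding a_def b_def s_def \<sigma>_def by blast+
  have "s \<le> 100 * (\<Sum>A\<in>\<G>. (\<Sum>j\<in>A. p j * x j)\<^sup>2)"
    unfolding s_def using grouped_sub
    by (intro grouped_second_moment_le[OF fin_groups G_disj G_class G_mass] x0) auto
  then have gain: "200 * (\<zeta> / 20000) * s \<le> \<zeta> * (\<Sum>A\<in>\<G>. (\<Sum>j\<in>A. p j * x j)\<^sup>2)"
    using mult_left_mono[of s _ "\<zeta> / 100"] zeta by simp
  have "2 * (\<integral>\<omega>. (\<Sum>j=1..n'. p j * X j \<omega> * (\<Sum>i=1..j. p i * X i \<omega>)) \<partial>M)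
      \<le> (a + b)\<^sup>2 + 2 * (s + \<sigma>) - \<zeta> * (\<Sum>A\<in>\<G>. (\<Sum>j\<in>A. p j * x j)\<^sup>2)"
    using expected_objective_le[of \<G> n' p \<zeta> X x, OF groups_sub G_disj p0 zeta(2)
        X_meas X_01 X_mean X_corr X_corr_G]
    unfolding split .
  also have "\<dots> \<le> (a + b)\<^sup>2 + 2 * (s + \<sigma>) - 200 * (\<zeta> / 20000) * s"
    using gain by linarith
  also have "\<dots> \<le> (3/2 - \<zeta> / 20000) * (s + \<sigma> + Z)"
  proof (rule ratio_estimate)
    show "(a + b)\<^sup>2 \<le> Z" "a\<^sup>2 + \<sigma> \<le> Z" "s + \<sigma> \<le> Z"
      using sdp_quadratic_form_ge[of n' x y p "{1..n'}", OF psd y_nonneg y_diag p0]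
        sdp_quadratic_form_ge[of n' x y p "\<Union>\<G>", OF psd y_nonneg y_diag p0 grouped_sub]
        sdp_quadratic_form_ge[of n' x y p "{}", OF psd y_nonneg y_diag p0] split
      by (simp_all add: Z_def a_def \<sigma>_def)
    show "b\<^sup>2 \<le> 19/45 * \<sigma>"
      unfolding b_def \<sigma>_def
      using p_ge x0 Gbar_small by (intro light_classes_weight_sq_le) (auto intro: less_imp_le)
  qed (use zeta x0 grouped_sub in \<open>auto simp: s_def intro!: sum_nonneg\<close>)
  also have "s + \<sigma> + Z = 2 * (\<Sum>j=1..n'. p j * (\<Sum>i=1..j. p i * y j i))"
    using sdp_objective_double[of n' y x p] y_sym y_diag split by (simp add: Z_def)
  finally show ?thesis by simp
qed

end
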